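(* Let $\eta\in(0,1)$, $B_1,\dots,B_H>0$, and reward functions $r_h:\mathcal{X}_h\times\mathcal{A}\to[-B_h,B_h]$ for $h\in[H]$. Define the extended rewards $\bar r_h(x,a)=r_h(x,a)$ for $(x,a)\in\mathcal{X}_h\times\mathcal{A}$ and $\bar r_h(x,a)=0$ if $x=\mathfrak{t}_h$ or $a=\mathfrak{a}$. Then $$\sup_{\pi\in\bar\Pi_\eta}\bar{\mathbb{E}}^\pi\Big[\sum_{h=1}^H\bar r_h(x_h,a_h)\Big]\ge\sup_{\pi\in\bar\Pi_{\mathrm{M}}}\bar{\mathbb{E}}^\pi\Big[\sum_{h=1}^H\bar r_h(x_h,a_h)\Big]-2Hd^{3/2}\eta\sum_{h=1}^HB_h,$$ where $\bar{\mathbb{E}}^\pi$ denotes expectation over trajectories of $\bar{\mathcal{M}}$ under $\pi$.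
   Context: Setting (Low-Rank MDP). Fix horizon $H\in\mathbb{N}$, dimension $d\in\mathbb{N}$, a finite action set $\mathcal{A}$ with $|\mathcal{A}|=A$, and a measurable state space $\mathcal{X}=\mathcal{X}_1\sqcup\cdots\sqcup\mathcal{X}_H$ (disjoint layers) carrying a $\sigma$-finite measure $\nu$. The MDP $\mathcal{M}$ has an initial distribution $\rho$ on $\mathcal{X}_1$ and, for each $h\in[H-1]$, measurable maps $\phi^\star_h:\mathcal{X}_h\times\mathcal{A}\to\mathbb{R}^d$ and $\mu^\star_{h+1}:\mathcal{X}_{h+1}\to\mathbb{R}^d$ such that for every $(x,a)\in\mathcal{X}_h\times\mathcal{A}$ the function $x'\mapsto\mu^\star_{h+1}(x')^\top\phi^\star_h(x,a)$ is a probability density w.r.t. $\nu$ on $\mathcal{X}_{h+1}$; this density is the transition kernel $T_h(\cdot\mid x,a)$. Normalization: $\|\phi^\star_h(x,a)\|\le 1$ for all $h,x,a$, and $\|\int_{\mathcal{X}_h}\mu^\star_h(x)g(x)\,d\nu(x)\|\le\sqrt d$ for every measurable $g:\mathcal{X}_h\to[0,1]$. $\|\cdot\|$ is the Euclidean norm. Extended MDP $\bar{\mathcal{M}}$: add terminal states $\mathfrak{t}_1,\dots,\mathfrak{t}_H$ (with $\bar{\mathcal{X}}_h=\mathcal{X}_h\cup\{\mathfrak{t}_h\}$) and a terminal action $\mathfrak{a}$ (with $\bar{\mathcal{A}}=\mathcal{A}\cup\{\mathfrak{a}\}$). Transitions from $(x,a)\in\mathcal{X}_h\times\mathcal{A}$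 are as in $\mathcal{M}$; taking $\mathfrak{a}$ in any state of layer $h$, or any action in $\mathfrak{t}_h$, leads deterministically to $\mathfrak{t}_{h+1}$; the initial distribution is $\rho$. The base measure is $\bar\nu=\nu+\sum_h\delta_{\mathfrak{t}_h}$, and for $x\in\bar{\mathcal{X}}_h$, $\bar d^\pi(x)$ is the density w.r.t. $\bar\nu$ of the law of $x_h$ under $\pi$ in $\bar{\mathcal{M}}$. $\bar\Pi_{\mathrm{M}}$ is the set of randomized Markov policies of $\bar{\mathcal{M}}$ (with $\pi(\mathfrak{t}_h)=\mathfrak{a}$). Reachable states: for $h\ge2$ and $\Pi'\subseteq\bar\Pi_{\mathrm{M}}$, $\mathcal{X}_{h,\eta}(\Pi'):=\{x\in\mathcal{X}_h:\exists\pi\in\Pi',\ \bar d^\pi(x)\ge\eta\|\mu^\star_h(x)\|\}$; by convention $\mathcal{X}_{1,\eta}(\Pi')=\mathcal{X}_1$. Truncated policy class: $\bar\Pi_{0,\eta}=\bar\Pi_{\mathrm{M}}$ and for $h\ge1$, $\pi\in\bar\Pi_{h,\eta}$ iff there exists $\pi'\in\bar\Pi_{h-1,\eta}$ with $\pi(x)=\pi'(x)$ for all $x$ in layers $t\neq h$, and for $x\in\mathcal{X}_h$: $\pi(x)=\pi'(x)$ if $x\in\mathcal{X}_{h,\eta}(\bar\Pi_{h-1,\eta})$ and $\pi(x)=\mathfrak{a}$ otherwise (and $\pi(\mathfrak{t}_h)=\mathfrak{a}$). Set $\bar\Pi_\eta:=\bar\Pi_{H,\eta}$. *)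

theory Defs
  imports "HOL-Probability.Probability"
begin

text \<open>
  States of the original MDP are the elements of a type 'x, which carries
  the sigma-finite measure nu (space nu = UNIV); layer h is the set X h (h = 1..H).  Extended actions are
  'a option, with None playing the role of the terminal action.  Features live in
  real^'d, so d = CARD('d).  A (randomized Markov) policy of the extended MDP is a
  function pol :: 'x => 'a option => real giving the probability of each extended
  action in each original state; in terminal states the terminal action is forced,
  so terminal states need not be represented in the policy.
\<close>

type_synonym ('x, 'a) policy = "'x \<Rightarrow> 'a option \<Rightarrow> real"

definition ext_actions :: "'a set \<Rightarrow> 'a option set" where
  "ext_actions A = insert None (Some ` A)"

definition term_act :: "'a option \<Rightarrow> real" where
  "term_act b = (if b = None then 1 else 0)"

definition markov_pols :: "'x measure \<Rightarrow> 'a set \<Rightarrow> ('x, 'a) policy set" where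
  "markov_pols nu A =
     {pol. (\<forall>x. (\<forall>b. 0 \<le> pol x b) \<and> (\<forall>b. b \<notin> ext_actions A \<longrightarrow> pol x b = 0)
              \<and> (\<Sum>b\<in>ext_actions A. pol x b) = 1)
         \<and> (\<forall>b. (\<lambda>x. pol x b) \<in> borel_measurable nu)}"

text \<open>Given the law M of the state x_h restricted to the non-terminal states X h,
  the density (w.r.t. nu) of x_(h+1) at a non-terminal state y of layer h+1:
  integral over x in X h of sum over a in A of pol(a|x) * mu_(h+1)(y)^T phi_h(x,a).\<close>
definition next_dens ::
  "'x measure \<Rightarrow> (nat \<Rightarrow> 'x set) \<Rightarrow> 'a set \<Rightarrow> (nat \<Rightarrow> 'x \<Rightarrow> 'a \<Rightarrow> real^'d)
   \<Rightarrow> (nat \<Rightarrow> 'x \<Rightarrow> real^'d) \<Rightarrow> ('x, 'a) policy \<Rightarrow> nat \<Rightarrow> 'x \<Rightarrow> ennreal" where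
  "next_dens M X A phi mu pol h y =
     indicator (X (Suc h)) y *
     (\<integral>\<^sup>+ x. indicator (X h) x *
        (\<Sum>a\<in>A. ennreal (pol x (Some a) * (mu (Suc h) y \<bullet> phi h x a))) \<partial>M)"

text \<open>Law of x_h under pol in the extended MDP, restricted to the non-terminal
  states X h (a sub-probability measure on 'x; the missing mass sits on the
  terminal state t_h).  Layers are indexed from 1; index 0 is a dummy.\<close>
fun st_law ::
  "'x measure \<Rightarrow> 'x measure \<Rightarrow> (nat \<Rightarrow> 'x set) \<Rightarrow> 'a set \<Rightarrow> (nat \<Rightarrow> 'x \<Rightarrow> 'a \<Rightarrow> real^'d)
   \<Rightarrow> (nat \<Rightarrow> 'x \<Rightarrow> real^'d) \<Rightarrow> ('x, 'a) policy \<Rightarrow> nat \<Rightarrow> 'x measure" where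
  "st_law nu rho X A phi mu pol 0 = rho"
| "st_law nu rho X A phi mu pol (Suc 0) = rho"
| "st_law nu rho X A phi mu pol (Suc (Suc h)) =
     density nu (next_dens (st_law nu rho X A phi mu pol (Suc h)) X A phi mu pol (Suc h))"

text \<open>The occupancy density bar d^pi(x) w.r.t. bar nu at a non-terminal state x of
  layer h >= 2.\<close>
definition dbar ::
  "'x measure \<Rightarrow> 'x measure \<Rightarrow> (nat \<Rightarrow> 'x set) \<Rightarrow> 'a set \<Rightarrow> (nat \<Rightarrow> 'x \<Rightarrow> 'a \<Rightarrow> real^'d)
   \<Rightarrow> (nat \<Rightarrow> 'x \<Rightarrow> real^'d) \<Rightarrow> ('x, 'a) policy \<Rightarrow> nat \<Rightarrow> 'x \<Rightarrow> ennreal" where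
  "dbar nu rho X A phi mu pol h x =
     next_dens (st_law nu rho X A phi mu pol (h - 1)) X A phi mu pol (h - 1) x"

definition reach ::
  "'x measure \<Rightarrow> 'x measure \<Rightarrow> (nat \<Rightarrow> 'x set) \<Rightarrow> 'a set \<Rightarrow> (nat \<Rightarrow> 'x \<Rightarrow> 'a \<Rightarrow> real^'d)
   \<Rightarrow> (nat \<Rightarrow> 'x \<Rightarrow> real^'d) \<Rightarrow> real \<Rightarrow> nat \<Rightarrow> ('x, 'a) policy set \<Rightarrow> 'x set" where
  "reach nu rho X A phi mu eta h P =
     (if h \<le> 1 then X 1
      else {x \<in> X h. \<exists>pol\<in>P. ennreal (eta * norm (mu h x)) \<le> dbar nu rho X A phi mu pol h x})"

fun trunc_pols ::
  "'x measure \<Rightarrow> 'x measure \<Rightarrow> (nat \<Rightarrow> 'x set) \<Rightarrow> 'a set \<Rightarrow> (nat \<Rightarrow> 'x \<Rightarrow> 'a \<Rightarrow> real^'d)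
   \<Rightarrow> (nat \<Rightarrow> 'x \<Rightarrow> real^'d) \<Rightarrow> real \<Rightarrow> nat \<Rightarrow> ('x, 'a) policy set" where
  "trunc_pols nu rho X A phi mu eta 0 = markov_pols nu A"
| "trunc_pols nu rho X A phi mu eta (Suc h) =
     {pol \<in> markov_pols nu A. \<exists>pol'\<in>trunc_pols nu rho X A phi mu eta h.
        (\<forall>x. x \<notin> X (Suc h) \<longrightarrow> pol x = pol' x) \<and>
        (\<forall>x\<in>X (Suc h). pol x =
           (if x \<in> reach nu rho X A phi mu eta (Suc h) (trunc_pols nu rho X A phi mu eta h)
            then pol' x else term_act))}"

text \<open>Extended rewards bar r_h(s,b): s = None is the terminal state, b = None the
  terminal action.\<close>
definition rbar :: "(nat \<Rightarrow> 'x \<Rightarrow> 'a \<Rightarrow> real) \<Rightarrow> nat \<Rightarrow> 'x option \<Rightarrow> 'a option \<Rightarrow> real" where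
  "rbar r h s b = (case (s, b) of (Some x, Some a) \<Rightarrow> r h x a | _ \<Rightarrow> 0)"

text \<open>bar E^pi[sum_h bar r_h(x_h,a_h)], computed by linearity of expectation as the sum
  over h of the expectation of bar r_h(x_h,a_h): the non-terminal part integrates
  against the law of x_h on X h and the policy; the terminal state t_h
  (probability 1 - P(x_h in X h)) always plays the terminal action.\<close>
definition pol_value ::
  "'x measure \<Rightarrow> 'x measure \<Rightarrow> (nat \<Rightarrow> 'x set) \<Rightarrow> 'a set \<Rightarrow> (nat \<Rightarrow> 'x \<Rightarrow> 'a \<Rightarrow> real^'d)
   \<Rightarrow> (nat \<Rightarrow> 'x \<Rightarrow> real^'d) \<Rightarrow> nat \<Rightarrow> (nat \<Rightarrow> 'x \<Rightarrow> 'a \<Rightarrow> real) \<Rightarrow> ('x, 'a) policy \<Rightarrow> real" where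
  "pol_value nu rho X A phi mu H r pol =
     (\<Sum>h=1..H.
        (\<integral>x. indicator (X h) x * (\<Sum>b\<in>ext_actions A. pol x b * rbar r h (Some x) b)
           \<partial>st_law nu rho X A phi mu pol h)
      + (1 - measure (st_law nu rho X A phi mu pol h) (X h)) * rbar r h None None)"

end

theory Submission
  imports Defs
begin

text \<open>
  Truncate a Markov policy P layer by layer: at layer t, the states that the policy truncated at
  the earlier layers reaches with occupancy density below eta |mu_t(x)| get the terminal action.
  The resulting policy Q lies in the truncated class, and its occupancy densities are dominated
  by those of P.  Let Delta_t be the mass that P puts on X_t but Q does not, and l_t the Q-mass of
  the states cut at layer t.  Then the reward lost at layer t is at most B_t (Delta_t + l_t), and
  Delta_(t+1) <= Delta_t + l_t, so Delta_t + l_t <= (t - 1) max_s l_s.  Finally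
  l_t <= eta \<integral> |mu_t| d nu <= 2 eta d^(3/2): testing the normalization of mu_t against the sign
  patterns of single coordinates bounds its L1-norm by 2 d sqrt d.
\<close>

section \<open>Densities and vector-valued integrals\<close>

lemma integrable_indicator_density:
  fixes D :: "'x \<Rightarrow> ennreal"
  assumes [measurable]: "S \<in> sets M" "D \<in> borel_measurable M"
    and fin: "\<And>x. D x < \<top>" and S_fin: "emeasure (density M D) S < \<top>"
  shows "integrable M (\<lambda>x. indicator S x * enn2real (D x))"
proof (rule integrableI_nonneg)
  have "(\<integral>\<^sup>+ x. ennreal (indicator S x * enn2real (D x)) \<partial>M) = (\<integral>\<^sup>+ x. D x * indicator S x \<partial>M)"
    using fin by (intro nn_integral_cong) (auto simp: indicator_def)
  also have "\<dots> = emeasure (density M D) S"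
    by (rule emeasure_density[symmetric]) measurable
  finally show "(\<integral>\<^sup>+ x. ennreal (indicator S x * enn2real (D x)) \<partial>M) < \<infinity>"
    using S_fin by simp
qed auto

lemma measure_density_eq_integral:
  fixes D :: "'x \<Rightarrow> ennreal"
  assumes [measurable]: "S \<in> sets M" "D \<in> borel_measurable M"
    and fin: "\<And>x. D x < \<top>" and int: "integrable M (\<lambda>x. indicator S x * enn2real (D x))"
  shows "measure (density M D) S = (\<integral>x. indicator S x * enn2real (D x) \<partial>M)"
proof -
  have "emeasure (density M D) S = (\<integral>\<^sup>+ x. D x * indicator S x \<partial>M)"
    by (rule emeasure_density) measurable
  also have "\<dots> = (\<integral>\<^sup>+ x. ennreal (indicator S x * enn2real (D x)) \<partial>M)"
    using fin by (intro nn_integral_cong) (auto simp: indicator_def)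
  also have "\<dots> = ennreal (\<integral>x. indicator S x * enn2real (D x) \<partial>M)"
    by (rule nn_integral_eq_integral[OF int]) auto
  finally show ?thesis
    by (simp add: measure_def integral_nonneg_AE)
qed

lemma restrict_diff_le_pointwise:
  fixes d1 d2 f :: real
  assumes "x \<in> S \<Longrightarrow> 0 \<le> d2 \<and> d2 \<le> d1 \<and> f \<le> c"
  shows "d1 * (indicator S x * f) - d2 * (indicator S x * (indicator K x * f))
         \<le> c * (indicator S x * d1) - c * (indicator S x * d2) + c * (indicator (S - K) x * d2)"
proof (cases "x \<in> S")
  case True
  then have "(d1 - d2) * f \<le> (d1 - d2) * c" "d1 * f \<le> d1 * c"
    using assms by (auto intro!: mult_left_mono)
  then show ?thesis using True by (cases "x \<in> K") (simp_all add: algebra_simps)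
qed simp

lemma integral_density_restrict_diff_le:
  fixes D1 D2 :: "'x \<Rightarrow> ennreal" and f :: "'x \<Rightarrow> real"
  assumes [measurable]: "S \<in> sets M" "K \<in> sets M"
    and [measurable]: "D1 \<in> borel_measurable M" "D2 \<in> borel_measurable M" "f \<in> borel_measurable M"
    and D21: "\<And>x. x \<in> S \<Longrightarrow> D2 x \<le> D1 x" and fin1: "\<And>x. D1 x < \<top>" and fin2: "\<And>x. D2 x < \<top>"
    and S_fin: "emeasure (density M D1) S < \<top>"
    and f_bound: "\<And>x. x \<in> S \<Longrightarrow> \<bar>f x\<bar> \<le> c"
  shows "(\<integral>x. indicator S x * f x \<partial>density M D1) - (\<integral>x. indicator S x * (indicator K x * f x) \<partial>density M D2)
         \<le> c * (measure (density M D1) S - measure (density M D2) S + measure (density M D2) (S - K))"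
proof -
  define d1 where "d1 x = enn2real (D1 x)" for x
  define d2 where "d2 x = enn2real (D2 x)" for x
  have [measurable]: "d1 \<in> borel_measurable M" "d2 \<in> borel_measurable M"
    unfolding d1_def d2_def by measurable
  have D1_eq: "D1 = (\<lambda>x. ennreal (d1 x))" and D2_eq: "D2 = (\<lambda>x. ennreal (d2 x))"
    using fin1 fin2 by (auto simp: d1_def d2_def)
  have d_nonneg: "0 \<le> d1 x" "0 \<le> d2 x" for x by (auto simp: d1_def d2_def)
  have d21: "x \<in> S \<Longrightarrow> d2 x \<le> d1 x" for x
    unfolding d1_def d2_def using D21 fin1 by (intro enn2real_mono) auto
  have int1: "integrable M (\<lambda>x. indicator S x * d1 x)"
    using integrable_indicator_density[OF _ _ fin1 S_fin] unfolding d1_def by simp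
  have dominated: "integrable M g"
    if [measurable]: "g \<in> borel_measurable M" and "\<And>x. \<bar>g x\<bar> \<le> \<bar>c\<bar> * (indicator S x * d1 x)" for g
    by (rule Bochner_Integration.integrable_bound[of _ "\<lambda>x. \<bar>c\<bar> * (indicator S x * d1 x)"])
       (use int1 that(2) in \<open>auto intro: order_trans[OF _ abs_ge_self]\<close>)
  have int2: "integrable M (\<lambda>x. indicator S x * d2 x)" and int3: "integrable M (\<lambda>x. indicator (S - K) x * d2 x)"
    by (rule Bochner_Integration.integrable_bound[OF int1]; auto simp: d_nonneg d21 indicator_def)+
  have f_abs: "x \<in> S \<Longrightarrow> \<bar>f x\<bar> \<le> \<bar>c\<bar>" for x
    using f_bound by force
  have int4: "integrable M (\<lambda>x. d1 x * (indicator S x * f x))"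
    using f_abs d_nonneg by (intro dominated) (auto simp: abs_mult indicator_def mult.commute[of "\<bar>c\<bar>"] intro!: mult_left_mono)
  have int5: "integrable M (\<lambda>x. d2 x * (indicator S x * (indicator K x * f x)))"
    using f_abs d_nonneg d21
    by (intro dominated) (auto simp: abs_mult indicator_def mult.commute[of "\<bar>c\<bar>"] intro!: mult_mono)
  have "(\<integral>x. d1 x * (indicator S x * f x) \<partial>M) - (\<integral>x. d2 x * (indicator S x * (indicator K x * f x)) \<partial>M)
      = (\<integral>x. d1 x * (indicator S x * f x) - d2 x * (indicator S x * (indicator K x * f x)) \<partial>M)"
    using int4 int5 by simp
  also have "\<dots> \<le> (\<integral>x. c * (indicator S x * d1 x) - c * (indicator S x * d2 x) + c * (indicator (S - K) x * d2 x) \<partial>M)"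
    using d_nonneg d21 f_bound int1 int2 int3 int4 int5
    by (intro integral_mono restrict_diff_le_pointwise) (auto simp: abs_le_iff)
  also have "\<dots> = c * ((\<integral>x. indicator S x * d1 x \<partial>M) - (\<integral>x. indicator S x * d2 x \<partial>M)
                     + (\<integral>x. indicator (S - K) x * d2 x \<partial>M))"
    using int1 int2 int3 by (simp add: algebra_simps)
  finally show ?thesis
    using measure_density_eq_integral[OF _ _ fin1 int1[unfolded d1_def]]
      measure_density_eq_integral[OF _ _ fin2 int2[unfolded d2_def]]
      measure_density_eq_integral[OF _ _ fin2 int3[unfolded d2_def]]
    unfolding D1_eq D2_eq d1_def[symmetric] d2_def[symmetric]
    by (simp add: integral_density d_nonneg)
qed

lemma borel_measurable_vec_component [measurable (raw)]:
  fixes f :: "'x \<Rightarrow> real^'d"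
  assumes [measurable]: "f \<in> borel_measurable M"
  shows "(\<lambda>x. f x $ i) \<in> borel_measurable M"
proof -
  have "(\<lambda>x. f x \<bullet> axis i 1) \<in> borel_measurable M" by measurable
  then show ?thesis by (simp add: inner_axis)
qed

lemma nn_integral_coordinate_part_le:
  fixes v :: "'x \<Rightarrow> real^'d"
  assumes [measurable]: "v \<in> borel_measurable M"
    and weighted: "\<And>g. g \<in> borel_measurable M \<Longrightarrow> (\<And>x. 0 \<le> g x \<and> g x \<le> 1)
                     \<Longrightarrow> integrable M (\<lambda>x. g x *\<^sub>R v x) \<and> norm (\<integral>x. g x *\<^sub>R v x \<partial>M) \<le> C"
    and s: "\<bar>s\<bar> = 1"
  shows "(\<integral>\<^sup>+ x. ennreal (max 0 (s * v x $ i)) \<partial>M) \<le> ennreal C"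
proof -
  define g :: "'x \<Rightarrow> real" where "g = indicator {x. 0 \<le> s * v x $ i}"
  have [measurable]: "g \<in> borel_measurable M" unfolding g_def by measurable
  have int: "integrable M (\<lambda>x. g x *\<^sub>R v x)" and bound: "norm (\<integral>x. g x *\<^sub>R v x \<partial>M) \<le> C"
    using weighted[of g] by (auto simp: g_def)
  have "(\<integral>\<^sup>+ x. ennreal (max 0 (s * v x $ i)) \<partial>M) = (\<integral>\<^sup>+ x. ennreal (s * (g x *\<^sub>R v x) $ i) \<partial>M)"
    by (intro nn_integral_cong) (auto simp: g_def indicator_def max_def)
  also have "\<dots> = ennreal (\<integral>x. s * (g x *\<^sub>R v x) $ i \<partial>M)"
    using integrable_bounded_linear[OF bounded_linear_vec_nth int]
    by (intro nn_integral_eq_integral) (auto simp: g_def indicator_def)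
  also have "\<dots> = ennreal (s * (\<integral>x. g x *\<^sub>R v x \<partial>M) $ i)"
    using integral_bounded_linear[OF bounded_linear_vec_nth int] by simp
  also have "\<dots> \<le> ennreal C"
  proof (rule ennreal_leI)
    have "s * (\<integral>x. g x *\<^sub>R v x \<partial>M) $ i \<le> \<bar>(\<integral>x. g x *\<^sub>R v x \<partial>M) $ i\<bar>"
      using abs_ge_self[of "s * (\<integral>x. g x *\<^sub>R v x \<partial>M) $ i"] s by (simp add: abs_mult)
    also have "\<dots> \<le> norm (\<integral>x. g x *\<^sub>R v x \<partial>M)" by (rule component_le_norm_cart)
    finally show "s * (\<integral>x. g x *\<^sub>R v x \<partial>M) $ i \<le> C" using bound by linarith
  qed
  finally show ?thesis .
qed

text \<open>Weighting v by the indicator of the sign of one coordinate isolates the positive or the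
  negative part of that coordinate.\<close>
lemma nn_integral_norm_le_of_weighted_integrals:
  fixes v :: "'x \<Rightarrow> real^'d"
  assumes [measurable]: "v \<in> borel_measurable M"
    and weighted: "\<And>g. g \<in> borel_measurable M \<Longrightarrow> (\<And>x. 0 \<le> g x \<and> g x \<le> 1)
                     \<Longrightarrow> integrable M (\<lambda>x. g x *\<^sub>R v x) \<and> norm (\<integral>x. g x *\<^sub>R v x \<partial>M) \<le> C"
  shows "(\<integral>\<^sup>+ x. ennreal (norm (v x)) \<partial>M) \<le> ennreal (2 * real CARD('d) * C)"
proof -
  have "ennreal (norm (v x)) \<le> (\<Sum>i\<in>UNIV. ennreal (max 0 (1 * v x $ i)) + ennreal (max 0 ((-1) * v x $ i)))"
    for x
  proof -
    have "\<bar>v x $ i\<bar> = max 0 (1 * v x $ i) + max 0 ((-1) * v x $ i)" for i by auto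
    then have "ennreal (norm (v x)) \<le> ennreal (\<Sum>i\<in>UNIV. max 0 (1 * v x $ i) + max 0 ((-1) * v x $ i))"
      using norm_le_l1_cart[of "v x"] by (intro ennreal_leI) simp
    also have "\<dots> = (\<Sum>i\<in>UNIV. ennreal (max 0 (1 * v x $ i) + max 0 ((-1) * v x $ i)))"
      by (rule sum_ennreal[symmetric]) auto
    also have "\<dots> = (\<Sum>i\<in>UNIV. ennreal (max 0 (1 * v x $ i)) + ennreal (max 0 ((-1) * v x $ i)))"
      by (intro sum.cong refl ennreal_plus) auto
    finally show ?thesis .
  qed
  then have "(\<integral>\<^sup>+ x. ennreal (norm (v x)) \<partial>M)
      \<le> (\<integral>\<^sup>+ x. (\<Sum>i\<in>UNIV. ennreal (max 0 (1 * v x $ i)) + ennreal (max 0 ((-1) * v x $ i))) \<partial>M)"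
    by (intro nn_integral_mono)
  also have "\<dots> = (\<Sum>i\<in>UNIV. (\<integral>\<^sup>+ x. ennreal (max 0 (1 * v x $ i)) \<partial>M) + (\<integral>\<^sup>+ x. ennreal (max 0 ((-1) * v x $ i)) \<partial>M))"
    by (simp add: nn_integral_sum nn_integral_add)
  also have "\<dots> \<le> (\<Sum>i\<in>(UNIV :: 'd set). ennreal C + ennreal C)"
    using weighted by (intro sum_mono add_mono nn_integral_coordinate_part_le) auto
  also have "\<dots> = ennreal (2 * real CARD('d) * C)"
    using weighted[of "\<lambda>_. 0"]
    by (simp add: ennreal_plus[symmetric] ennreal_of_nat_eq_real_of_nat ennreal_mult[symmetric] mult_ac
        del: ennreal_plus)
  finally show ?thesis .
qed

section \<open>Markov policies of the extended MDP\<close>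

lemma sum_ext_actions: "finite A \<Longrightarrow> (\<Sum>b\<in>ext_actions A. f b) = f None + (\<Sum>a\<in>A. f (Some a))"
  unfolding ext_actions_def by (subst sum.insert) (auto simp: sum.reindex)

lemma markov_pols_nonneg: "pol \<in> markov_pols M A \<Longrightarrow> 0 \<le> pol x b"
  by (simp add: markov_pols_def)

lemma markov_pols_measurable: "pol \<in> markov_pols M A \<Longrightarrow> (\<lambda>x. pol x b) \<in> borel_measurable M"
  by (simp add: markov_pols_def)

lemma markov_pols_sum_actions:
  assumes "finite A" "pol \<in> markov_pols M A"
  shows "0 \<le> (\<Sum>a\<in>A. pol x (Some a))" "(\<Sum>a\<in>A. pol x (Some a)) \<le> 1"
proof -
  have "pol x None + (\<Sum>a\<in>A. pol x (Some a)) = 1"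
    using assms by (simp add: markov_pols_def flip: sum_ext_actions)
  moreover show "0 \<le> (\<Sum>a\<in>A. pol x (Some a))"
    using markov_pols_nonneg[OF assms(2)] by (intro sum_nonneg)
  ultimately show "(\<Sum>a\<in>A. pol x (Some a)) \<le> 1"
    using markov_pols_nonneg[OF assms(2), of x None] by linarith
qed

lemma term_act_in_markov_pols: "finite A \<Longrightarrow> (\<lambda>_. term_act) \<in> markov_pols M A"
  by (auto simp: markov_pols_def term_act_def ext_actions_def sum_ext_actions)

lemma markov_pols_terminate_on:
  assumes "finite A" "S \<in> sets M" "pol \<in> markov_pols M A"
  shows "(\<lambda>x. if x \<in> S then term_act else pol x) \<in> markov_pols M A"
proof -
  have "(\<lambda>x. (if x \<in> S then term_act else pol x) b) \<in> borel_measurable M" for b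
  proof -
    have "(\<lambda>x. if x \<in> S then term_act b else pol x b) \<in> borel_measurable M"
      using assms by (intro measurable_If_set) (auto simp: markov_pols_def)
    then show ?thesis by (simp add: if_distrib[of "\<lambda>p. p b"])
  qed
  then show ?thesis
    using assms(3) term_act_in_markov_pols[OF assms(1), of M] unfolding markov_pols_def by auto
qed

section \<open>State laws of the low-rank MDP\<close>

locale low_rank_mdp =
  fixes nu rho :: "'x measure"
    and X :: "nat \<Rightarrow> 'x set"
    and A :: "'a set"
    and phi :: "nat \<Rightarrow> 'x \<Rightarrow> 'a \<Rightarrow> real^'d"
    and mu :: "nat \<Rightarrow> 'x \<Rightarrow> real^'d"
    and H :: nat
  assumes sigma_fin: "sigma_finite_measure nu"
    and space_nu: "space nu = UNIV"
    and layers_meas: "\<And>h. h \<in> {1..H} \<Longrightarrow> X h \<in> sets nu"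
    and layers_disj: "disjoint_family_on X {1..H}"
    and fin_A: "finite A"
    and rho_prob: "prob_space rho"
    and rho_sets: "sets rho = sets nu"
    and phi_meas: "\<And>h a. h \<in> {1..H-1} \<Longrightarrow> a \<in> A \<Longrightarrow> (\<lambda>x. phi h x a) \<in> borel_measurable nu"
    and mu_meas: "\<And>h. h \<in> {2..H} \<Longrightarrow> mu h \<in> borel_measurable nu"
    and trans_nonneg: "\<And>h x a y. h \<in> {1..H-1} \<Longrightarrow> x \<in> X h \<Longrightarrow> a \<in> A \<Longrightarrow> y \<in> X (Suc h)
                         \<Longrightarrow> 0 \<le> mu (Suc h) y \<bullet> phi h x a"
    and trans_prob: "\<And>h x a. h \<in> {1..H-1} \<Longrightarrow> x \<in> X h \<Longrightarrow> a \<in> A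
                         \<Longrightarrow> (\<integral>\<^sup>+ y. indicator (X (Suc h)) y * ennreal (mu (Suc h) y \<bullet> phi h x a) \<partial>nu) = 1"
    and phi_norm: "\<And>h x a. h \<in> {1..H-1} \<Longrightarrow> x \<in> X h \<Longrightarrow> a \<in> A \<Longrightarrow> norm (phi h x a) \<le> 1"
    and mu_norm: "\<And>h g. h \<in> {2..H} \<Longrightarrow> g \<in> borel_measurable nu \<Longrightarrow> (\<forall>x\<in>X h. 0 \<le> g x \<and> g x \<le> 1)
                    \<Longrightarrow> integrable nu (\<lambda>x. (indicator (X h) x * g x) *\<^sub>R mu h x)
                      \<and> norm (\<integral>x. (indicator (X h) x * g x) *\<^sub>R mu h x \<partial>nu) \<le> sqrt (real CARD('d))"
begin

abbreviation "Pols \<equiv> markov_pols nu A"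
abbreviation "law \<equiv> st_law nu rho X A phi mu"
abbreviation "occ \<equiv> dbar nu rho X A phi mu"
abbreviation "ndens M \<equiv> next_dens M X A phi mu"

definition kernel :: "('x, 'a) policy \<Rightarrow> nat \<Rightarrow> 'x \<Rightarrow> 'x \<Rightarrow> ennreal" where
  "kernel pol t x y = indicator (X t) x * (\<Sum>a\<in>A. ennreal (pol x (Some a) * (mu (Suc t) y \<bullet> phi t x a)))"

lemma next_dens_eq: "ndens M pol t y = indicator (X (Suc t)) y * (\<integral>\<^sup>+ x. kernel pol t x y \<partial>M)"
  by (simp add: next_dens_def kernel_def)

lemma kernel_outside: "x \<notin> X t \<Longrightarrow> kernel pol t x y = 0"
  by (simp add: kernel_def)

lemma layers_disjoint: "i \<in> {1..H} \<Longrightarrow> j \<in> {1..H} \<Longrightarrow> i \<noteq> j \<Longrightarrow> x \<in> X i \<Longrightarrow> x \<notin> X j"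
  using layers_disj unfolding disjoint_family_on_def by blast

lemma UNIV_in_sets [measurable]: "UNIV \<in> sets nu"
  using sets.top[of nu] space_nu by simp

lemma sets_law [measurable_cong]: "sets (law pol t) = sets nu"
proof (cases t)
  case (Suc n)
  then show ?thesis by (cases n) (simp_all add: rho_sets)
qed (simp add: rho_sets)

lemma space_law [simp]: "space (law pol t) = UNIV"
  using sets_eq_imp_space_eq[OF sets_law] space_nu by simp

lemma law_Suc: "1 \<le> t \<Longrightarrow> law pol (Suc t) = density nu (ndens (law pol t) pol t)"
  by (cases t) auto

lemma law_eq_density_occ: "2 \<le> t \<Longrightarrow> law pol t = density nu (occ pol t)"
  using law_Suc[of "t - 1" pol] unfolding dbar_def by (cases t) auto

lemma occ_Suc: "2 \<le> t \<Longrightarrow> occ pol (Suc t) = ndens (density nu (occ pol t)) pol t"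
  using law_eq_density_occ[of t pol] by (intro ext) (simp add: dbar_def)

lemma kernel_measurable:
  assumes pol: "pol \<in> Pols" and t: "t \<in> {1..H-1}"
  shows "case_prod (kernel pol t) \<in> borel_measurable (nu \<Otimes>\<^sub>M nu)"
proof -
  have [measurable]: "X t \<in> sets nu" "mu (Suc t) \<in> borel_measurable nu" "(\<lambda>x. pol x b) \<in> borel_measurable nu" for b
    using t layers_meas mu_meas markov_pols_measurable[OF pol] by auto
  have [measurable]: "(\<lambda>(x, y). ennreal (pol x (Some a) * (mu (Suc t) y \<bullet> phi t x a))) \<in> borel_measurable (nu \<Otimes>\<^sub>M nu)"
    if a: "a \<in> A" for a
  proof -
    have [measurable]: "(\<lambda>x. phi t x a) \<in> borel_measurable nu" using phi_meas t a by auto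
    show ?thesis by measurable
  qed
  show ?thesis unfolding kernel_def by measurable
qed

lemma kernel_measurable_fst: "pol \<in> Pols \<Longrightarrow> t \<in> {1..H-1} \<Longrightarrow> (\<lambda>x. kernel pol t x y) \<in> borel_measurable nu"
  using measurable_compose[OF measurable_Pair2'[of y nu nu] kernel_measurable] space_nu by simp

lemma next_dens_measurable:
  assumes pol: "pol \<in> Pols" and t: "t \<in> {1..H-1}"
    and M: "sigma_finite_measure M" "sets M = sets nu"
  shows "ndens M pol t \<in> borel_measurable nu"
proof -
  have "(\<lambda>(y, x). kernel pol t x y) \<in> borel_measurable (nu \<Otimes>\<^sub>M M)"
    using kernel_measurable[OF pol t] measurable_pair_swap_iff[of "case_prod (kernel pol t)"]
    by (simp add: measurable_cong_sets[OF sets_pair_measure_cong[OF refl M(2)] refl])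
  from sigma_finite_measure.borel_measurable_nn_integral[OF M(1) this]
  have [measurable]: "(\<lambda>y. \<integral>\<^sup>+ x. kernel pol t x y \<partial>M) \<in> borel_measurable nu" by simp
  have [measurable]: "X (Suc t) \<in> sets nu" using t layers_meas by auto
  show ?thesis unfolding next_dens_eq[abs_def] by measurable
qed

lemma kernel_mass:
  assumes pol: "pol \<in> Pols" and t: "t \<in> {1..H-1}" and x: "x \<in> X t"
  shows "(\<integral>\<^sup>+ y. indicator (X (Suc t)) y * kernel pol t x y \<partial>nu) = ennreal (\<Sum>a\<in>A. pol x (Some a))"
proof -
  have [measurable]: "X (Suc t) \<in> sets nu" "mu (Suc t) \<in> borel_measurable nu"
    using t layers_meas mu_meas by auto
  have "(\<integral>\<^sup>+ y. indicator (X (Suc t)) y * kernel pol t x y \<partial>nu)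
      = (\<integral>\<^sup>+ y. (\<Sum>a\<in>A. ennreal (pol x (Some a)) * (indicator (X (Suc t)) y * ennreal (mu (Suc t) y \<bullet> phi t x a))) \<partial>nu)"
    using x markov_pols_nonneg[OF pol]
    by (intro nn_integral_cong) (simp add: kernel_def sum_distrib_left ennreal_mult' mult_ac)
  also have "\<dots> = (\<Sum>a\<in>A. ennreal (pol x (Some a)) * (\<integral>\<^sup>+ y. indicator (X (Suc t)) y * ennreal (mu (Suc t) y \<bullet> phi t x a) \<partial>nu))"
    by (simp add: nn_integral_sum nn_integral_cmult)
  also have "\<dots> = ennreal (\<Sum>a\<in>A. pol x (Some a))"
    using trans_prob t x markov_pols_nonneg[OF pol] by simp
  finally show ?thesis .
qed

lemma next_dens_mass:
  assumes pol: "pol \<in> Pols" and t: "t \<in> {1..H-1}"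
    and M: "sigma_finite_measure M" "sets M = sets nu"
  shows "(\<integral>\<^sup>+ y. ndens M pol t y \<partial>nu) = (\<integral>\<^sup>+ x. indicator (X t) x * ennreal (\<Sum>a\<in>A. pol x (Some a)) \<partial>M)"
proof -
  interpret M: sigma_finite_measure M by (rule M(1))
  interpret nu: sigma_finite_measure nu by (rule sigma_fin)
  interpret pair_sigma_finite M nu ..
  have [measurable]: "X (Suc t) \<in> sets nu" using t layers_meas by auto
  have [measurable]: "case_prod (kernel pol t) \<in> borel_measurable (M \<Otimes>\<^sub>M nu)"
    using kernel_measurable[OF pol t]
    by (simp add: measurable_cong_sets[OF sets_pair_measure_cong[OF M(2) refl] refl])
  have "(\<integral>\<^sup>+ y. ndens M pol t y \<partial>nu) = (\<integral>\<^sup>+ y. (\<integral>\<^sup>+ x. indicator (X (Suc t)) y * kernel pol t x y \<partial>M) \<partial>nu)"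
    using kernel_measurable_fst[OF pol t]
    by (intro nn_integral_cong) (simp add: next_dens_eq nn_integral_cmult measurable_cong_sets[OF M(2) refl])
  also have "\<dots> = (\<integral>\<^sup>+ x. (\<integral>\<^sup>+ y. indicator (X (Suc t)) y * kernel pol t x y \<partial>nu) \<partial>M)"
    by (rule Fubini') measurable
  also have "\<dots> = (\<integral>\<^sup>+ x. indicator (X t) x * ennreal (\<Sum>a\<in>A. pol x (Some a)) \<partial>M)"
    using kernel_mass[OF pol t] by (intro nn_integral_cong) (auto simp: kernel_outside split: split_indicator)
  finally show ?thesis .
qed

lemma emeasure_law_space_le_1:
  assumes pol: "pol \<in> Pols"
  shows "1 \<le> t \<Longrightarrow> t \<le> H \<Longrightarrow> emeasure (law pol t) UNIV \<le> 1"
proof (induction t rule: dec_induct)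
  case base
  interpret prob_space rho by (rule rho_prob)
  show ?case using emeasure_space_1 space_law[of pol 1] by simp
next
  case (step n)
  then have n: "n \<in> {1..H-1}" by auto
  then have "finite_measure (law pol n)"
    using step by (intro finite_measureI) (auto simp: top_unique)
  then have M: "sigma_finite_measure (law pol n)" by (rule finite_measure.axioms(1))
  have "emeasure (law pol (Suc n)) UNIV = (\<integral>\<^sup>+ y. ndens (law pol n) pol n y \<partial>nu)"
    using step.hyps next_dens_measurable[OF pol n M sets_law]
    by (simp add: law_Suc emeasure_density)
  also have "\<dots> = (\<integral>\<^sup>+ x. indicator (X n) x * ennreal (\<Sum>a\<in>A. pol x (Some a)) \<partial>law pol n)"
    by (rule next_dens_mass[OF pol n M sets_law])
  also have "\<dots> \<le> (\<integral>\<^sup>+ x. 1 \<partial>law pol n)"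
    using markov_pols_sum_actions[OF fin_A pol] by (intro nn_integral_mono) (auto simp: indicator_def)
  finally show ?case using step n by simp
qed

lemma emeasure_law_le_1: "pol \<in> Pols \<Longrightarrow> t \<in> {1..H} \<Longrightarrow> emeasure (law pol t) S \<le> 1"
  using emeasure_law_space_le_1[of pol t] emeasure_space[of "law pol t" S] by auto

lemma finite_measure_law: "pol \<in> Pols \<Longrightarrow> t \<in> {1..H} \<Longrightarrow> finite_measure (law pol t)"
  using emeasure_law_le_1[of pol t UNIV] by (intro finite_measureI) (auto simp: top_unique)

lemma occ_measurable: "pol \<in> Pols \<Longrightarrow> t \<in> {2..H} \<Longrightarrow> occ pol t \<in> borel_measurable nu"
  unfolding dbar_def
  by (intro next_dens_measurable finite_measure.axioms(1) finite_measure_law sets_law) auto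

lemma next_dens_le:
  assumes pol: "pol \<in> Pols" and t: "t \<in> {1..H-1}" and M: "sets M = sets nu"
  shows "ndens M pol t y \<le> ennreal (norm (mu (Suc t) y)) * emeasure M UNIV"
proof -
  have "kernel pol t x y \<le> ennreal (norm (mu (Suc t) y))" if y: "y \<in> X (Suc t)" for x
  proof (cases "x \<in> X t")
    case True
    have "mu (Suc t) y \<bullet> phi t x a \<le> norm (mu (Suc t) y)" if a: "a \<in> A" for a
      using norm_cauchy_schwarz[of "mu (Suc t) y" "phi t x a"] phi_norm[OF t True a]
        mult_left_mono[of "norm (phi t x a)" 1 "norm (mu (Suc t) y)"] by simp
    then have "(\<Sum>a\<in>A. pol x (Some a) * (mu (Suc t) y \<bullet> phi t x a)) \<le> (\<Sum>a\<in>A. pol x (Some a)) * norm (mu (Suc t) y)"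
      using markov_pols_nonneg[OF pol] by (simp add: sum_distrib_right sum_mono mult_left_mono)
    also have "\<dots> \<le> norm (mu (Suc t) y)"
      using markov_pols_sum_actions[OF fin_A pol] by (simp add: mult_left_le_one_le)
    finally show ?thesis
      using True y trans_nonneg[OF t True _ y] markov_pols_nonneg[OF pol]
      by (simp add: kernel_def ennreal_leI)
  qed (simp add: kernel_outside)
  then have "ndens M pol t y \<le> (\<integral>\<^sup>+ x. ennreal (norm (mu (Suc t) y)) \<partial>M)"
    unfolding next_dens_eq
    by (cases "y \<in> X (Suc t)") (auto intro!: nn_integral_mono simp del: nn_integral_const)
  then show ?thesis
    using sets_eq_imp_space_eq[OF M] space_nu by simp
qed

lemma occ_finite:
  assumes pol: "pol \<in> Pols" and t: "t \<in> {2..H}"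
  shows "occ pol t x < \<top>"
proof -
  have t': "t - 1 \<in> {1..H-1}" using t by auto
  from next_dens_le[OF pol this sets_law]
  have "occ pol t x \<le> ennreal (norm (mu t x)) * emeasure (law pol (t - 1)) UNIV"
    using t unfolding dbar_def by simp
  also have "\<dots> < \<top>"
  proof -
    have "emeasure (law pol (t - 1)) UNIV \<le> 1" using emeasure_law_le_1[OF pol, of "t - 1" UNIV] t' by auto
    then show ?thesis using ennreal_one_less_top by (simp add: ennreal_mult_less_top order.strict_trans1)
  qed
  finally show ?thesis .
qed

lemma measure_law_Suc_layer:
  assumes pol: "pol \<in> Pols" and t: "t \<in> {1..H-1}"
  shows "measure (law pol (Suc t)) (X (Suc t)) = (\<integral>x. indicator (X t) x * (\<Sum>a\<in>A. pol x (Some a)) \<partial>law pol t)"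
proof -
  interpret M: finite_measure "law pol t" using finite_measure_law[OF pol] t by auto
  have [measurable]: "X t \<in> sets nu" "X (Suc t) \<in> sets nu" "(\<lambda>x. pol x b) \<in> borel_measurable nu" for b
    using t layers_meas markov_pols_measurable[OF pol] by auto
  have bounds: "0 \<le> (\<Sum>a\<in>A. pol x (Some a))" "(\<Sum>a\<in>A. pol x (Some a)) \<le> 1" for x
    using markov_pols_sum_actions[OF fin_A pol] by auto
  have int: "integrable (law pol t) (\<lambda>x. indicator (X t) x * (\<Sum>a\<in>A. pol x (Some a)))"
    using bounds by (intro M.integrable_const_bound[where B=1]) (auto simp: indicator_def)
  have "emeasure (law pol (Suc t)) (X (Suc t)) = (\<integral>\<^sup>+ y. ndens (law pol t) pol t y \<partial>nu)"
    using t next_dens_measurable[OF pol t M.sigma_finite_measure_axioms sets_law]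
    by (simp add: law_Suc emeasure_density) (auto intro!: nn_integral_cong simp: next_dens_eq split: split_indicator)
  also have "\<dots> = (\<integral>\<^sup>+ x. ennreal (indicator (X t) x * (\<Sum>a\<in>A. pol x (Some a))) \<partial>law pol t)"
    by (simp add: next_dens_mass[OF pol t M.sigma_finite_measure_axioms sets_law] indicator_mult_ennreal mult.commute)
  also have "\<dots> = ennreal (\<integral>x. indicator (X t) x * (\<Sum>a\<in>A. pol x (Some a)) \<partial>law pol t)"
    using bounds by (intro nn_integral_eq_integral int) auto
  finally show ?thesis
    using bounds by (simp add: measure_def integral_nonneg_AE)
qed

lemma next_dens_cong: "(\<And>x. x \<in> X t \<Longrightarrow> pol x = pol' x) \<Longrightarrow> ndens M pol t = ndens M pol' t"
  by (intro ext) (auto simp: next_dens_eq kernel_def intro!: nn_integral_cong split: split_indicator)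

lemma law_cong: "(\<And>s x. 1 \<le> s \<Longrightarrow> s < t \<Longrightarrow> x \<in> X s \<Longrightarrow> pol x = pol' x) \<Longrightarrow> law pol t = law pol' t"
proof (induction t rule: less_induct)
  case (less t)
  show ?case
  proof (cases "2 \<le> t")
    case True
    then obtain s where t: "t = Suc s" and s: "1 \<le> s" by (cases t) auto
    have "law pol s = law pol' s" using less t by (intro less.IH) auto
    moreover have "ndens (law pol' s) pol s = ndens (law pol' s) pol' s"
      using less.prems t s by (intro next_dens_cong) auto
    ultimately show ?thesis using law_Suc[OF s] t by simp
  next
    case False
    then have "t = 0 \<or> t = 1" by auto
    then show ?thesis by auto
  qed
qed

lemma occ_cong:
  assumes "2 \<le> t" and agree: "\<And>s x. 1 \<le> s \<Longrightarrow> s < t \<Longrightarrow> x \<in> X s \<Longrightarrow> pol x = pol' x"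
  shows "occ pol t = occ pol' t"
proof -
  have "law pol (t - 1) = law pol' (t - 1)" using agree by (intro law_cong) auto
  moreover have "ndens M pol (t - 1) = ndens M pol' (t - 1)" for M
    using assms(1) by (intro next_dens_cong agree) auto
  ultimately show ?thesis unfolding dbar_def by simp
qed

lemma next_dens_mono:
  assumes pol: "pol \<in> Pols" "pol' \<in> Pols" and t: "t \<in> {1..H-1}"
    and D: "D \<in> borel_measurable nu" "D' \<in> borel_measurable nu"
    and D'_le: "\<And>x. x \<in> X t \<Longrightarrow> D' x \<le> D x"
    and pol'_le: "\<And>x a. x \<in> X t \<Longrightarrow> a \<in> A \<Longrightarrow> pol' x (Some a) \<le> pol x (Some a)"
  shows "ndens (density nu D') pol' t y \<le> ndens (density nu D) pol t y"
proof -
  have "D' x * kernel pol' t x y \<le> D x * kernel pol t x y" if y: "y \<in> X (Suc t)" for x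
  proof (cases "x \<in> X t")
    case True
    have "kernel pol' t x y \<le> kernel pol t x y"
      using True pol'_le trans_nonneg[OF t True _ y]
      by (auto simp: kernel_def intro!: sum_mono ennreal_leI mult_right_mono)
    then show ?thesis by (intro mult_mono D'_le True) auto
  qed (simp add: kernel_outside)
  then show ?thesis
    using kernel_measurable_fst[OF pol(1) t] kernel_measurable_fst[OF pol(2) t]
    by (cases "y \<in> X (Suc t)") (auto simp: next_dens_eq nn_integral_density D intro!: nn_integral_mono)
qed

lemma nn_integral_norm_mu_le:
  assumes h: "h \<in> {2..H}" and S: "S \<in> sets nu" "S \<subseteq> X h"
  shows "(\<integral>\<^sup>+ x. indicator S x * ennreal (norm (mu h x)) \<partial>nu) \<le> ennreal (2 * real CARD('d) * sqrt (real CARD('d)))"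
proof -
  have [measurable]: "mu h \<in> borel_measurable nu" "S \<in> sets nu" using h mu_meas S by auto
  have "(\<integral>\<^sup>+ x. ennreal (norm (indicator S x *\<^sub>R mu h x)) \<partial>nu) \<le> ennreal (2 * real CARD('d) * sqrt (real CARD('d)))"
  proof (rule nn_integral_norm_le_of_weighted_integrals)
    fix g :: "'x \<Rightarrow> real" assume [measurable]: "g \<in> borel_measurable nu" and g: "\<And>x. 0 \<le> g x \<and> g x \<le> 1"
    have "(\<lambda>x. g x *\<^sub>R indicator S x *\<^sub>R mu h x) = (\<lambda>x. (indicator (X h) x * (g x * indicator S x)) *\<^sub>R mu h x)"
      using S(2) by (auto simp: indicator_def fun_eq_iff)
    moreover have "\<forall>x\<in>X h. 0 \<le> g x * indicator S x \<and> g x * indicator S x \<le> 1"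
      using g by (auto simp: indicator_def)
    ultimately show "integrable nu (\<lambda>x. g x *\<^sub>R indicator S x *\<^sub>R mu h x)
        \<and> norm (\<integral>x. g x *\<^sub>R indicator S x *\<^sub>R mu h x \<partial>nu) \<le> sqrt (real CARD('d))"
      using mu_norm[OF h, of "\<lambda>x. g x * indicator S x"] by simp
  qed measurable
  then show ?thesis by (simp add: indicator_mult_ennreal mult.commute)
qed

section \<open>Truncated policies\<close>

definition low_occ :: "real \<Rightarrow> ('x, 'a) policy \<Rightarrow> nat \<Rightarrow> 'x set" where
  "low_occ eta pol t = {x \<in> X t. 2 \<le> t \<and> t \<le> H \<and> \<not> ennreal (eta * norm (mu t x)) \<le> occ pol t x}"

text \<open>The truncation of the proof idea; trunc_pol eta P H is the policy of the truncated class
  that replaces P.\<close>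
primrec trunc_pol :: "real \<Rightarrow> ('x, 'a) policy \<Rightarrow> nat \<Rightarrow> ('x, 'a) policy" where
  "trunc_pol eta P 0 = P"
| "trunc_pol eta P (Suc t) =
     (\<lambda>x. if x \<in> low_occ eta (trunc_pol eta P t) (Suc t) then term_act else trunc_pol eta P t x)"

lemma low_occ_subset: "low_occ eta pol t \<subseteq> X t"
  by (auto simp: low_occ_def)

lemma low_occ_measurable: "pol \<in> Pols \<Longrightarrow> low_occ eta pol t \<in> sets nu"
proof (cases "t \<in> {2..H}")
  case True
  moreover assume "pol \<in> Pols"
  ultimately have [measurable]: "occ pol t \<in> borel_measurable nu" "mu t \<in> borel_measurable nu" "X t \<in> sets nu"
    using occ_measurable mu_meas layers_meas by auto
  have "low_occ eta pol t = {x \<in> X t. \<not> ennreal (eta * norm (mu t x)) \<le> occ pol t x}"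
    using True by (auto simp: low_occ_def)
  then show ?thesis by simp
next
  case False
  then have "low_occ eta pol t = {}" by (auto simp: low_occ_def)
  then show ?thesis by simp
qed

lemma trunc_pols_subset: "trunc_pols nu rho X A phi mu eta h \<subseteq> Pols"
  by (cases h) auto

lemma trunc_pol_layer:
  assumes j: "j \<in> {1..H}" and x: "x \<in> X j"
  shows "trunc_pol eta P t x = (if j \<le> t then trunc_pol eta P j x else P x)"
proof (induction t)
  case (Suc t)
  have "x \<notin> low_occ eta (trunc_pol eta P t) (Suc t)" if "j \<noteq> Suc t"
    using layers_disjoint[OF j _ that x] low_occ_subset by (auto simp: low_occ_def)
  then show ?case using Suc by (cases "j = Suc t") auto
qed (use j in auto)

lemma trunc_pol_markov: "P \<in> Pols \<Longrightarrow> trunc_pol eta P t \<in> Pols"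
proof (induction t)
  case (Suc t)
  then show ?case using markov_pols_terminate_on[OF fin_A low_occ_measurable] by simp
qed simp

lemma trunc_pol_in_trunc_pols:
  assumes P: "P \<in> Pols"
  shows "t \<le> s \<Longrightarrow> s \<le> H \<Longrightarrow> trunc_pol eta P s \<in> trunc_pols nu rho X A phi mu eta t"
proof (induction t arbitrary: s)
  case 0
  then show ?case using trunc_pol_markov[OF P] by simp
next
  case (Suc t)
  have prev: "trunc_pol eta P s \<in> trunc_pols nu rho X A phi mu eta t" "trunc_pol eta P t \<in> trunc_pols nu rho X A phi mu eta t"
    using Suc by simp_all
  have "trunc_pol eta P s x = term_act"
    if x: "x \<in> X (Suc t)" and unreached: "x \<notin> reach nu rho X A phi mu eta (Suc t) (trunc_pols nu rho X A phi mu eta t)" for x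
  proof -
    have "2 \<le> Suc t" using x unreached by (auto simp: reach_def split: if_splits)
    moreover have "\<not> ennreal (eta * norm (mu (Suc t) x)) \<le> occ (trunc_pol eta P t) (Suc t) x"
      using x unreached prev(2) calculation by (auto simp: reach_def)
    ultimately have "x \<in> low_occ eta (trunc_pol eta P t) (Suc t)"
      using x Suc.prems by (simp add: low_occ_def)
    then show ?thesis using trunc_pol_layer[of "Suc t" x eta P s] x Suc.prems by auto
  qed
  then show ?case
    unfolding trunc_pols.simps(2) using prev(1) trunc_pol_markov[OF P]
    by (intro CollectI conjI bexI[of _ "trunc_pol eta P s"]) auto
qed

lemma trunc_pol_eq:
  assumes t: "t \<in> {1..H}" and x: "x \<in> X t"
  shows "trunc_pol eta P H x = (if x \<in> low_occ eta (trunc_pol eta P H) t then term_act else P x)"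
proof -
  obtain s where s: "t = Suc s" using t by (cases t) auto
  have agree: "trunc_pol eta P s y = trunc_pol eta P H y" if "1 \<le> j" "j < t" "y \<in> X j" for j y
    using trunc_pol_layer[of j y eta P s] trunc_pol_layer[of j y eta P H] that s t by auto
  have "low_occ eta (trunc_pol eta P s) t = low_occ eta (trunc_pol eta P H) t"
    using occ_cong[OF _ agree] by (cases "2 \<le> t") (auto simp: low_occ_def)
  moreover have "trunc_pol eta P s x = P x"
    using trunc_pol_layer[OF t x, of eta P s] s by simp
  ultimately show ?thesis
    using trunc_pol_layer[OF t x, of eta P H] t s by simp
qed

lemma trunc_pol_action_le:
  "P \<in> Pols \<Longrightarrow> t \<in> {1..H} \<Longrightarrow> x \<in> X t \<Longrightarrow> trunc_pol eta P H x (Some a) \<le> P x (Some a)"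
  using trunc_pol_eq[of t x eta P] markov_pols_nonneg[of P] by (auto simp: term_act_def)

text \<open>Truncation only removes mass, so the densities decrease layer by layer.\<close>
lemma occ_trunc_pol_le:
  assumes P: "P \<in> Pols" and t: "t \<in> {2..H}"
  shows "occ (trunc_pol eta P H) t x \<le> occ P t x"
proof -
  have "2 \<le> t" "t \<le> H" using t by auto
  then show ?thesis
  proof (induction t arbitrary: x rule: dec_induct)
    case base
    have "ndens rho (trunc_pol eta P H) 1 = ndens rho P 1"
      using trunc_pol_eq[of 1 _ eta P] base by (intro next_dens_cong) (auto simp: low_occ_def)
    then show ?case by (simp add: dbar_def numeral_2_eq_2)
  next
    case (step n)
    then have n: "n \<in> {1..H-1}" "n \<in> {2..H}" by auto
    show ?case unfolding occ_Suc[OF step.hyps(1)]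
      using step n P trunc_pol_markov[OF P] trunc_pol_action_le[OF P, of n]
      by (intro next_dens_mono occ_measurable) auto
  qed
qed

end

section \<open>Loss of value under truncation\<close>

locale low_rank_mdp_reward = low_rank_mdp nu rho X A phi mu H
  for nu rho :: "'x measure" and X :: "nat \<Rightarrow> 'x set" and A :: "'a set"
    and phi :: "nat \<Rightarrow> 'x \<Rightarrow> 'a \<Rightarrow> real^'d" and mu :: "nat \<Rightarrow> 'x \<Rightarrow> real^'d" and H :: nat +
  fixes r :: "nat \<Rightarrow> 'x \<Rightarrow> 'a \<Rightarrow> real" and B :: "nat \<Rightarrow> real"
  assumes B_nonneg: "\<And>h. h \<in> {1..H} \<Longrightarrow> 0 \<le> B h"
    and r_meas: "\<And>h a. h \<in> {1..H} \<Longrightarrow> a \<in> A \<Longrightarrow> (\<lambda>x. r h x a) \<in> borel_measurable nu"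
    and r_bound: "\<And>h x a. h \<in> {1..H} \<Longrightarrow> x \<in> X h \<Longrightarrow> a \<in> A \<Longrightarrow> \<bar>r h x a\<bar> \<le> B h"
begin

definition exp_reward :: "('x, 'a) policy \<Rightarrow> nat \<Rightarrow> 'x \<Rightarrow> real" where
  "exp_reward pol t x = (\<Sum>b\<in>ext_actions A. pol x b * rbar r t (Some x) b)"

definition layer_value :: "('x, 'a) policy \<Rightarrow> nat \<Rightarrow> real" where
  "layer_value pol t = (\<integral>x. indicator (X t) x * exp_reward pol t x \<partial>law pol t)"

lemma pol_value_eq_sum_layer_value: "pol_value nu rho X A phi mu H r pol = (\<Sum>t=1..H. layer_value pol t)"
  unfolding pol_value_def layer_value_def exp_reward_def by (simp add: rbar_def)

lemma exp_reward_eq: "exp_reward pol t x = (\<Sum>a\<in>A. pol x (Some a) * r t x a)"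
  by (simp add: exp_reward_def sum_ext_actions[OF fin_A] rbar_def)

lemma exp_reward_measurable:
  assumes pol: "pol \<in> Pols" and t: "t \<in> {1..H}"
  shows "exp_reward pol t \<in> borel_measurable nu"
proof -
  have [measurable]: "(\<lambda>x. pol x b) \<in> borel_measurable nu" for b
    using markov_pols_measurable[OF pol] .
  have "(\<lambda>x. pol x (Some a) * r t x a) \<in> borel_measurable nu" if "a \<in> A" for a
    using r_meas[OF t that] by measurable
  then show ?thesis unfolding exp_reward_eq[abs_def] by measurable
qed

lemma abs_exp_reward_le:
  assumes pol: "pol \<in> Pols" and t: "t \<in> {1..H}" and x: "x \<in> X t"
  shows "\<bar>exp_reward pol t x\<bar> \<le> B t"
proof -
  have "\<bar>exp_reward pol t x\<bar> \<le> (\<Sum>a\<in>A. pol x (Some a) * B t)"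
    unfolding exp_reward_eq using r_bound[OF t x] markov_pols_nonneg[OF pol]
    by (intro order_trans[OF sum_abs] sum_mono) (simp add: abs_mult mult_left_mono)
  also have "\<dots> \<le> B t"
    using markov_pols_sum_actions[OF fin_A pol] B_nonneg[OF t]
    by (simp add: sum_distrib_right[symmetric] mult_left_le_one_le)
  finally show ?thesis .
qed

lemma layer_value_le:
  assumes pol: "pol \<in> Pols" and t: "t \<in> {1..H}"
  shows "layer_value pol t \<le> B t"
proof -
  interpret M: finite_measure "law pol t" using finite_measure_law[OF pol t] .
  have [measurable]: "X t \<in> sets nu" "exp_reward pol t \<in> borel_measurable nu"
    using layers_meas t exp_reward_measurable[OF pol t] by auto
  have bound: "\<bar>indicator (X t) x * exp_reward pol t x\<bar> \<le> B t" for x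
    using abs_exp_reward_le[OF pol t] B_nonneg[OF t] by (simp add: indicator_def)
  have "layer_value pol t \<le> (\<integral>x. B t \<partial>law pol t)"
    unfolding layer_value_def using bound B_nonneg[OF t]
    by (intro integral_mono M.integrable_const_bound[where B="B t"]) (auto simp: abs_le_iff)
  also have "\<dots> \<le> B t"
    using emeasure_law_le_1[OF pol t, of UNIV] B_nonneg[OF t]
    by (simp add: M.emeasure_eq_measure mult_left_le_one_le)
  finally show ?thesis .
qed

lemma pol_value_le: "pol \<in> Pols \<Longrightarrow> pol_value nu rho X A phi mu H r pol \<le> (\<Sum>t=1..H. B t)"
  unfolding pol_value_eq_sum_layer_value by (intro sum_mono layer_value_le)

context
  fixes eta :: real and P :: "('x, 'a) policy"
  assumes eta_pos: "0 < eta" and P: "P \<in> Pols"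
begin

abbreviation "Q \<equiv> trunc_pol eta P H"

definition mass_gap :: "nat \<Rightarrow> real" where
  "mass_gap t = measure (law P t) (X t) - measure (law Q t) (X t)"

definition cut_mass :: "nat \<Rightarrow> real" where
  "cut_mass t = measure (law Q t) (low_occ eta Q t)"

lemma Q_markov: "Q \<in> Pols"
  by (rule trunc_pol_markov[OF P])

lemma sum_actions_trunc_pol:
  assumes "t \<in> {1..H}" "x \<in> X t"
  shows "(\<Sum>a\<in>A. Q x (Some a) * g a) = indicator (X t - low_occ eta Q t) x * (\<Sum>a\<in>A. P x (Some a) * g a)"
  using trunc_pol_eq[OF assms, of eta P] assms(2) by (simp add: term_act_def)

lemma integral_law_trunc_pol_diff_le:
  assumes t: "t \<in> {2..H}" and [measurable]: "f \<in> borel_measurable nu"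
    and f_bound: "\<And>x. x \<in> X t \<Longrightarrow> \<bar>f x\<bar> \<le> c"
  shows "(\<integral>x. indicator (X t) x * f x \<partial>law P t)
         - (\<integral>x. indicator (X t) x * (indicator (X t - low_occ eta Q t) x * f x) \<partial>law Q t)
         \<le> c * (mass_gap t + cut_mass t)"
proof -
  have t2: "2 \<le> t" and [measurable]: "X t \<in> sets nu" "low_occ eta Q t \<in> sets nu"
    using t layers_meas low_occ_measurable[OF Q_markov] by auto
  have "emeasure (density nu (occ P t)) (X t) < \<top>"
    using emeasure_law_le_1[OF P, of t "X t"] t law_eq_density_occ[OF t2, of P]
    by (auto intro: order.strict_trans1[OF _ ennreal_one_less_top])
  then have "(\<integral>x. indicator (X t) x * f x \<partial>density nu (occ P t))
         - (\<integral>x. indicator (X t) x * (indicator (X t - low_occ eta Q t) x * f x) \<partial>density nu (occ Q t))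
         \<le> c * (measure (density nu (occ P t)) (X t) - measure (density nu (occ Q t)) (X t)
                 + measure (density nu (occ Q t)) (X t - (X t - low_occ eta Q t)))"
    using occ_trunc_pol_le[OF P t] occ_finite[OF P t] occ_finite[OF Q_markov t]
      occ_measurable[OF P t] occ_measurable[OF Q_markov t] f_bound
    by (intro integral_density_restrict_diff_le) auto
  moreover have "X t - (X t - low_occ eta Q t) = low_occ eta Q t" using low_occ_subset by auto
  ultimately show ?thesis
    unfolding mass_gap_def cut_mass_def law_eq_density_occ[OF t2] by simp
qed

lemma layer_value_trunc_pol_gap:
  assumes t: "t \<in> {2..H}"
  shows "layer_value P t - layer_value Q t \<le> B t * (mass_gap t + cut_mass t)"
proof -
  have t1: "t \<in> {1..H}" using t by auto
  have "layer_value Q t = (\<integral>x. indicator (X t) x * (indicator (X t - low_occ eta Q t) x * exp_reward P t x) \<partial>law Q t)"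
    unfolding layer_value_def exp_reward_eq
    using sum_actions_trunc_pol[OF t1] by (intro Bochner_Integration.integral_cong) (auto simp: indicator_def)
  then show ?thesis
    unfolding layer_value_def
    using integral_law_trunc_pol_diff_le[OF t exp_reward_measurable[OF P t1] abs_exp_reward_le[OF P t1]]
    by simp
qed

lemma mass_gap_Suc_le:
  assumes t: "t \<in> {2..H-1}"
  shows "mass_gap (Suc t) \<le> mass_gap t + cut_mass t"
proof -
  have t1: "t \<in> {1..H}" "t \<in> {1..H-1}" and t2: "t \<in> {2..H}" using t by auto
  have [measurable]: "(\<lambda>x. P x b) \<in> borel_measurable nu" for b
    using markov_pols_measurable[OF P] .
  have "measure (law Q (Suc t)) (X (Suc t))
      = (\<integral>x. indicator (X t) x * (indicator (X t - low_occ eta Q t) x * (\<Sum>a\<in>A. P x (Some a))) \<partial>law Q t)"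
    unfolding measure_law_Suc_layer[OF Q_markov t1(2)]
    using sum_actions_trunc_pol[OF t1(1), of _ "\<lambda>_. 1"]
    by (intro Bochner_Integration.integral_cong) (auto simp: indicator_def)
  then show ?thesis
    using integral_law_trunc_pol_diff_le[OF t2, of "\<lambda>x. \<Sum>a\<in>A. P x (Some a)" 1]
      markov_pols_sum_actions[OF fin_A P]
    unfolding mass_gap_def[of "Suc t"] measure_law_Suc_layer[OF P t1(2)] by simp
qed

text \<open>The cut states have density below eta |mu_t|, whose integral is at most 2 d sqrt d.\<close>
lemma cut_mass_le:
  assumes t: "t \<in> {2..H}"
  shows "cut_mass t \<le> 2 * eta * real CARD('d) * sqrt (real CARD('d))"
proof -
  have t2: "2 \<le> t" using t by auto
  have [measurable]: "low_occ eta Q t \<in> sets nu" "occ Q t \<in> borel_measurable nu" "mu t \<in> borel_measurable nu"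
    using low_occ_measurable[OF Q_markov] occ_measurable[OF Q_markov t] mu_meas t by auto
  have "emeasure (law Q t) (low_occ eta Q t) = (\<integral>\<^sup>+ x. occ Q t x * indicator (low_occ eta Q t) x \<partial>nu)"
    unfolding law_eq_density_occ[OF t2] by (rule emeasure_density) measurable
  also have "\<dots> \<le> (\<integral>\<^sup>+ x. ennreal eta * (indicator (low_occ eta Q t) x * ennreal (norm (mu t x))) \<partial>nu)"
    using eta_pos by (intro nn_integral_mono) (auto simp: low_occ_def ennreal_mult split: split_indicator)
  also have "\<dots> = ennreal eta * (\<integral>\<^sup>+ x. indicator (low_occ eta Q t) x * ennreal (norm (mu t x)) \<partial>nu)"
    by (rule nn_integral_cmult) measurable
  also have "\<dots> \<le> ennreal eta * ennreal (2 * real CARD('d) * sqrt (real CARD('d)))"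
    using nn_integral_norm_mu_le[OF t _ low_occ_subset] by (intro mult_left_mono) auto
  also have "\<dots> = ennreal (2 * eta * real CARD('d) * sqrt (real CARD('d)))"
    using eta_pos by (simp add: ennreal_mult[symmetric] mult_ac)
  finally show ?thesis
    unfolding cut_mass_def using eta_pos by (simp add: measure_def enn2real_leI)
qed

lemma layer_value_trunc_pol_1: "1 \<le> H \<Longrightarrow> layer_value Q 1 = layer_value P 1"
  unfolding layer_value_def exp_reward_eq
  using sum_actions_trunc_pol[of 1] by (intro Bochner_Integration.integral_cong) (auto simp: low_occ_def indicator_def)

lemma mass_gap_2: "2 \<le> H \<Longrightarrow> mass_gap 2 = 0"
proof -
  assume "2 \<le> H"
  then have "law P 2 = law Q 2"
    using trunc_pol_eq[of 1 _ eta P] by (intro law_cong) (auto simp: low_occ_def numeral_2_eq_2 less_Suc_eq)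
  then show ?thesis by (simp add: mass_gap_def)
qed

lemma mass_gap_cut_mass_le:
  assumes "2 \<le> t" "t \<le> H"
  shows "mass_gap t + cut_mass t \<le> real (t - 1) * (2 * eta * real CARD('d) * sqrt (real CARD('d)))"
  using assms
proof (induction t rule: dec_induct)
  case base
  then show ?case using mass_gap_2 cut_mass_le[of 2] by simp
next
  case (step n)
  have "mass_gap (Suc n) \<le> mass_gap n + cut_mass n" using step by (intro mass_gap_Suc_le) auto
  moreover have "cut_mass (Suc n) \<le> 2 * eta * real CARD('d) * sqrt (real CARD('d))"
    using step by (intro cut_mass_le) auto
  moreover have "mass_gap n + cut_mass n \<le> real (n - 1) * (2 * eta * real CARD('d) * sqrt (real CARD('d)))"
    using step by simp
  moreover have n: "real (Suc n - 1) = real (n - 1) + 1" using step.hyps by simp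
  ultimately show ?case by (simp only: n distrib_right)
qed

lemma pol_value_trunc_pol_ge:
  "pol_value nu rho X A phi mu H r P - 2 * real H * real CARD('d) powr (3/2) * eta * (\<Sum>t=1..H. B t)
   \<le> pol_value nu rho X A phi mu H r Q"
proof -
  define c where "c = 2 * eta * real CARD('d) * sqrt (real CARD('d))"
  have c_nonneg: "0 \<le> c" using eta_pos by (simp add: c_def)
  have "layer_value P t - layer_value Q t \<le> B t * (real H * c)" if t: "t \<in> {1..H}" for t
  proof (cases "t = 1")
    case True
    then show ?thesis using layer_value_trunc_pol_1 B_nonneg[OF t] c_nonneg t by simp
  next
    case False
    then have t2: "t \<in> {2..H}" using t by auto
    have "real (t - 1) * c \<le> real H * c" using t2 c_nonneg by (intro mult_right_mono) auto
    then have "mass_gap t + cut_mass t \<le> real H * c"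
      using mass_gap_cut_mass_le[of t] t2 unfolding c_def by auto
    then show ?thesis
      using layer_value_trunc_pol_gap[OF t2] B_nonneg[OF t] by (auto intro: order_trans mult_left_mono)
  qed
  then have "pol_value nu rho X A phi mu H r P - pol_value nu rho X A phi mu H r Q \<le> (\<Sum>t=1..H. B t * (real H * c))"
    unfolding pol_value_eq_sum_layer_value sum_subtractf[symmetric] by (intro sum_mono) auto
  also have "\<dots> = 2 * real H * real CARD('d) powr (3/2) * eta * (\<Sum>t=1..H. B t)"
  proof -
    have "real CARD('d) powr (3/2) = real CARD('d) powr (1 + 1/2)" by simp
    also have "\<dots> = real CARD('d) powr 1 * real CARD('d) powr (1/2)" by (rule powr_add)
    also have "\<dots> = real CARD('d) * sqrt (real CARD('d))" by (simp add: powr_half_sqrt)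
    finally have "real CARD('d) powr (3/2) = real CARD('d) * sqrt (real CARD('d))" .
    then show ?thesis by (simp only: sum_distrib_right[symmetric]) (simp add: c_def mult_ac)
  qed
  finally show ?thesis by simp
qed

end

end

theorem mainTheorem13:
  fixes nu rho :: "'x measure"
    and X :: "nat \<Rightarrow> 'x set"
    and A :: "'a set"
    and phi :: "nat \<Rightarrow> 'x \<Rightarrow> 'a \<Rightarrow> real^'d"
    and mu :: "nat \<Rightarrow> 'x \<Rightarrow> real^'d"
    and H :: nat
    and eta :: real
    and B :: "nat \<Rightarrow> real"
    and r :: "nat \<Rightarrow> 'x \<Rightarrow> 'a \<Rightarrow> real"
  assumes sigma_fin: "sigma_finite_measure nu"
    and space_nu: "space nu = UNIV"
    and layers_meas: "\<And>h. h \<in> {1..H} \<Longrightarrow> X h \<in> sets nu"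
    and layers_disj: "disjoint_family_on X {1..H}"
    and layers_cover: "(\<Union>h\<in>{1..H}. X h) = UNIV"
    and fin_A: "finite A"
    and rho_prob: "prob_space rho"
    and rho_sets: "sets rho = sets nu"
    and rho_X1: "emeasure rho (X 1) = 1"
    and phi_meas: "\<And>h a. h \<in> {1..H-1} \<Longrightarrow> a \<in> A \<Longrightarrow> (\<lambda>x. phi h x a) \<in> borel_measurable nu"
    and mu_meas: "\<And>h. h \<in> {2..H} \<Longrightarrow> mu h \<in> borel_measurable nu"
    and trans_nonneg: "\<And>h x a y. h \<in> {1..H-1} \<Longrightarrow> x \<in> X h \<Longrightarrow> a \<in> A \<Longrightarrow> y \<in> X (Suc h)
                         \<Longrightarrow> 0 \<le> mu (Suc h) y \<bullet> phi h x a"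
    and trans_prob: "\<And>h x a. h \<in> {1..H-1} \<Longrightarrow> x \<in> X h \<Longrightarrow> a \<in> A
                         \<Longrightarrow> (\<integral>\<^sup>+ y. indicator (X (Suc h)) y * ennreal (mu (Suc h) y \<bullet> phi h x a) \<partial>nu) = 1"
    and phi_norm: "\<And>h x a. h \<in> {1..H-1} \<Longrightarrow> x \<in> X h \<Longrightarrow> a \<in> A \<Longrightarrow> norm (phi h x a) \<le> 1"
    and mu_norm: "\<And>h g. h \<in> {2..H} \<Longrightarrow> g \<in> borel_measurable nu \<Longrightarrow> (\<forall>x\<in>X h. 0 \<le> g x \<and> g x \<le> 1)
                    \<Longrightarrow> integrable nu (\<lambda>x. (indicator (X h) x * g x) *\<^sub>R mu h x)
                      \<and> norm (\<integral>x. (indicator (X h) x * g x) *\<^sub>R mu h x \<partial>nu) \<le> sqrt (real CARD('d))"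
    and eta_pos: "0 < eta" and eta_lt1: "eta < 1"
    and B_pos: "\<And>h. h \<in> {1..H} \<Longrightarrow> 0 < B h"
    and r_meas: "\<And>h a. h \<in> {1..H} \<Longrightarrow> a \<in> A \<Longrightarrow> (\<lambda>x. r h x a) \<in> borel_measurable nu"
    and r_bound: "\<And>h x a. h \<in> {1..H} \<Longrightarrow> x \<in> X h \<Longrightarrow> a \<in> A \<Longrightarrow> \<bar>r h x a\<bar> \<le> B h"
  shows "(SUP pol\<in>trunc_pols nu rho X A phi mu eta H. pol_value nu rho X A phi mu H r pol)
         \<ge> (SUP pol\<in>markov_pols nu A. pol_value nu rho X A phi mu H r pol)
           - 2 * real H * real CARD('d) powr (3/2) * eta * (\<Sum>h=1..H. B h)"
proof -
  interpret low_rank_mdp_reward nu rho X A phi mu H r B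
  proof (intro low_rank_mdp_reward.intro low_rank_mdp.intro low_rank_mdp_reward_axioms.intro)
    show "0 \<le> B h" if "h \<in> {1..H}" for h using B_pos[OF that] by simp
  qed (fact assms)+
  let ?V = "pol_value nu rho X A phi mu H r"
  let ?T = "trunc_pols nu rho X A phi mu eta H"
  have bdd: "bdd_above (?V ` ?T)"
    using pol_value_le trunc_pols_subset by (intro bdd_aboveI2) blast
  have "?V P - 2 * real H * real CARD('d) powr (3/2) * eta * (\<Sum>h=1..H. B h) \<le> (SUP pol\<in>?T. ?V pol)"
    if P: "P \<in> Pols" for P
    using pol_value_trunc_pol_ge[OF eta_pos P]
      cSUP_upper[OF trunc_pol_in_trunc_pols[OF P order.refl order.refl] bdd] by linarith
  then have "(SUP pol\<in>Pols. ?V pol) \<le> (SUP pol\<in>?T. ?V pol) + 2 * real H * real CARD('d) powr (3/2) * eta * (\<Sum>h=1..H. B h)"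
    using term_act_in_markov_pols[OF fin_A] by (intro cSUP_least) (auto simp: algebra_simps)
  then show ?thesis by simp
qed

end
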